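(* Let $\xi=(\xi_+,\xi_-)\in\mathcal{P}^2$ be minimal and let $n\in\mathbb{Z}\setminus\{0\}$. Then there exists a CSCA $\mathbf{a}$ with $\mathbf{a}\xi=u^n\xi$ (i.e. $\xi$ is a glider with eigenvalue $u^n$ for some CSCA) if and only if $\xi\wedge\bar\xi$ divides $u^{-n}+u^{n}$ in $\mathcal{P}$.
   Context: $\mathcal{P}$ denotes the ring of Laurent polynomials in $u$ over $\mathbb{Z}_2$; $\bar p(u)=p(u^{-1})$, applied entrywise to vectors. $\mathcal{R}$ is the subring of palindromes ($\bar p=p$). A CSCA is a $2\times2$ matrix with entries in $\mathcal{R}$ and determinant $1$. A vector $\xi\in\mathcal{P}^2$ is minimal if $\xi_+$ and $\xi_-$ have no common non-invertible divisor in $\mathcal{P}$ (the invertible elements of $\mathcal{P}$ are the monomials). The wedge product is $\xi\wedge\eta=\xi_+\eta_-+\eta_+\xi_-$. *)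

theory Defs
  imports "HOL-Computational_Algebra.Formal_Laurent_Series" "HOL-Library.Z2"
begin

text \<open>Laurent polynomials in u over Z_2, realised inside the formal Laurent series
  over the two-element field (type bit) as those with finite support.\<close>

definition LP :: "bit fls set" where
  "LP = {f. finite {n. fls_nth f n \<noteq> 0}}"

definition upow :: "int \<Rightarrow> bit fls" where
  "upow n = fls_X_intpow n"

text \<open>Bar involution p(u) to p(u^-1) (only meaningful on LP).\<close>
definition lbar :: "bit fls \<Rightarrow> bit fls" where
  "lbar f = Abs_fls (\<lambda>n. fls_nth f (- n))"

definition RP :: "bit fls set" where
  "RP = {p \<in> LP. lbar p = p}"

definition ldvd :: "bit fls \<Rightarrow> bit fls \<Rightarrow> bool" where
  "ldvd a b \<longleftrightarrow> (\<exists>q \<in> LP. b = a * q)"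

definition lunit :: "bit fls \<Rightarrow> bool" where
  "lunit a \<longleftrightarrow> (\<exists>e \<in> LP. a * e = 1)"

definition minimal :: "bit fls \<Rightarrow> bit fls \<Rightarrow> bool" where
  "minimal xp xm \<longleftrightarrow> xp \<in> LP \<and> xm \<in> LP \<and>
     (\<forall>d \<in> LP. ldvd d xp \<and> ldvd d xm \<longrightarrow> lunit d)"

text \<open>CSCA: the matrix ((a, b), (c, d)) with palindromic entries and determinant 1.\<close>
definition csca :: "bit fls \<Rightarrow> bit fls \<Rightarrow> bit fls \<Rightarrow> bit fls \<Rightarrow> bool" where
  "csca a b c d \<longleftrightarrow> a \<in> RP \<and> b \<in> RP \<and> c \<in> RP \<and> d \<in> RP \<and> a * d - b * c = 1"

definition wedge :: "bit fls \<times> bit fls \<Rightarrow> bit fls \<times> bit fls \<Rightarrow> bit fls" where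
  "wedge x y = fst x * snd y + fst y * snd x"

end

theory Submission
  imports Defs
begin

text \<open>A minimal \<open>\<xi>\<close> has a Bezout relation \<open>\<alpha> \<xi>\<^sub>+ + \<beta> \<xi>\<^sub>- = 1\<close>, obtained from the
  polynomial Euclidean algorithm after clearing powers of \<open>u\<close>. Write \<open>\<xi>'\<close> for the barred
  vector, \<open>w = \<xi> \<and> \<xi>'\<close> and \<open>s = u\<^sup>-\<^sup>n + u\<^sup>n\<close>. In characteristic 2, \<open>A \<xi> = u\<^sup>n \<xi>\<close> says that
  each row of \<open>A + u\<^sup>n I\<close> annihilates \<open>\<xi>\<close>, so by the Bezout relation the rows are
  \<open>k (\<xi>\<^sub>-, \<xi>\<^sub>+)\<close> and \<open>m (\<xi>\<^sub>-, \<xi>\<^sub>+)\<close>. Barring the eigen equations (the entries of \<open>A\<close> are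
  palindromes) gives \<open>k w = s \<xi>'\<^sub>+\<close> and \<open>m w = s \<xi>'\<^sub>-\<close>, and the barred Bezout relation
  turns these into \<open>w | s\<close>.

  Conversely, if \<open>s = q w\<close>, then \<open>q\<close> is a palindrome because \<open>s\<close> and \<open>w\<close> are (this is
  where \<open>n \<noteq> 0\<close>, i.e. \<open>s \<noteq> 0\<close>, is needed), and \<open>A = u\<^sup>n I + q \<xi>' (\<xi>\<^sub>-, \<xi>\<^sub>+)\<close> satisfies
  \<open>A \<xi> = u\<^sup>n \<xi>\<close>, has palindromic entries and determinant \<open>u\<^sup>n (u\<^sup>n + s) = 1\<close>.\<close>

lemma bit_fls_add_self [simp]: "(x::bit fls) + x = 0"
  by (rule fls_eqI) (metis bit_2_eq_0 mult_2 mult_zero_left plus_fls.rep_eq zero_fls.rep_eq)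

lemma bit_fls_add_cancel_left [simp]: "(x::bit fls) + (x + y) = y"
  by (metis add.assoc add_0 bit_fls_add_self)

lemma bit_fls_add_eq_0_iff: "(x::bit fls) + y = 0 \<longleftrightarrow> x = y"
proof
  assume "x + y = 0"
  then have "x + (x + y) = x"
    by simp
  then show "x = y"
    by simp
qed simp

definition fls_of_poly :: "'a::comm_semiring_1 poly \<Rightarrow> 'a fls" where
  "fls_of_poly p = fps_to_fls (fps_of_poly p)"

lemma fls_of_poly_nth: "fls_nth (fls_of_poly p) n = (if n < 0 then 0 else coeff p (nat n))"
  by (simp add: fls_of_poly_def)

lemma fls_of_poly_0 [simp]: "fls_of_poly 0 = 0"
  by (simp add: fls_of_poly_def)

lemma fls_of_poly_mult: "fls_of_poly (p * q) = fls_of_poly p * fls_of_poly q"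
  by (simp add: fls_of_poly_def fps_of_poly_mult fls_times_fps_to_fls)

lemma fls_of_poly_add: "fls_of_poly (p + q) = fls_of_poly p + fls_of_poly q"
  by (simp add: fls_of_poly_def fps_of_poly_add)

lemma fls_of_poly_pCons: "fls_of_poly (pCons c p) = fls_const c + upow 1 * fls_of_poly p"
  by (simp add: fls_of_poly_def fps_of_poly_pCons fls_times_fps_to_fls upow_def
      flip: fls_X_conv_shift_1)

lemma upow_add: "upow (k + l) = upow k * upow l"
  by (simp add: upow_def fls_X_intpow_times_fls_X_intpow)

lemma upow_0 [simp]: "upow 0 = 1"
  by (simp add: upow_def)

lemma upow_nth: "fls_nth (upow k) n = (if n = k then 1 else 0)"
  by (simp add: upow_def)

lemma upow_mult_nth: "fls_nth (upow k * f) n = fls_nth f (n - k)"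
  by (simp add: upow_def fls_X_intpow_times_conv_shift)

lemma upow_neg_mult_upow [simp]: "upow (- k) * upow k = 1"
  by (simp flip: upow_add)

lemma upow_neg_add_upow_nonzero:
  assumes "n \<noteq> 0"
  shows "upow (- n) + upow n \<noteq> 0"
proof
  assume "upow (- n) + upow n = 0"
  then have "fls_nth (upow (- n)) n = fls_nth (upow n) n"
    by (simp add: bit_fls_add_eq_0_iff)
  with assms show False
    by (simp add: upow_nth)
qed

lemma LP_add: "f \<in> LP \<Longrightarrow> g \<in> LP \<Longrightarrow> f + g \<in> LP"
  unfolding LP_def mem_Collect_eq
  by (rule finite_subset[of _ "{n. fls_nth f n \<noteq> 0} \<union> {n. fls_nth g n \<noteq> 0}"]) auto

lemma LP_upow [simp]: "upow k \<in> LP"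
  unfolding LP_def mem_Collect_eq by (rule finite_subset[of _ "{k}"]) (auto simp: upow_nth)

lemma LP_upow_mult_fls_of_poly: "upow k * fls_of_poly p \<in> LP"
proof -
  have "n \<in> {k..k + int (degree p)}" if "fls_nth (upow k * fls_of_poly p) n \<noteq> 0" for n
  proof -
    have "\<not> n < k" "coeff p (nat (n - k)) \<noteq> 0"
      using that by (auto simp: upow_mult_nth fls_of_poly_nth split: if_splits)
    then show ?thesis using le_degree by fastforce
  qed
  then show ?thesis
    unfolding LP_def mem_Collect_eq by (rule finite_subset[OF subsetI]) simp_all
qed

lemma LP_fls_of_poly [simp]: "fls_of_poly p \<in> LP"
  using LP_upow_mult_fls_of_poly[of 0] by simp

lemma LP_0 [simp]: "0 \<in> LP"
  using LP_fls_of_poly[of 0] by simp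

lemma LP_fls_const [simp]: "fls_const c \<in> LP"
  using LP_fls_of_poly[of "[:c:]"] by (simp add: fls_of_poly_pCons)

lemma LP_support_bounded:
  assumes "f \<in> LP"
  obtains M where "\<And>n. fls_nth f n \<noteq> 0 \<Longrightarrow> \<bar>n\<bar> \<le> M"
proof -
  have "finite (abs ` {n. fls_nth f n \<noteq> 0})"
    using assms unfolding LP_def by simp
  then have "bdd_above (abs ` {n. fls_nth f n \<noteq> 0})"
    by (rule bdd_above_finite)
  then obtain M where "\<forall>x \<in> abs ` {n. fls_nth f n \<noteq> 0}. x \<le> M"
    unfolding bdd_above_def by blast
  then show ?thesis
    by (intro that) blast
qed

lemma LP_obtain_poly:
  assumes "f \<in> LP"
  obtains k p where "f = upow k * fls_of_poly p"
proof -
  obtain M where bound: "\<And>n. fls_nth f n \<noteq> 0 \<Longrightarrow> \<bar>n\<bar> \<le> M"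
    using LP_support_bounded[OF assms] by blast
  define p where "p = Abs_poly (\<lambda>i. if i \<le> nat (2 * M) then fls_nth f (int i - M) else 0)"
  have "f = upow (- M) * fls_of_poly p"
  proof (rule fls_eqI)
    fix n
    show "fls_nth f n = fls_nth (upow (- M) * fls_of_poly p) n"
      using bound[of n]
      by (cases "fls_nth f n = 0")
        (auto simp: upow_mult_nth fls_of_poly_nth p_def coeff_Abs_poly_If_le)
  qed
  then show ?thesis by (rule that)
qed

lemma LP_mult:
  assumes "f \<in> LP" "g \<in> LP"
  shows "f * g \<in> LP"
proof -
  obtain k p where "f = upow k * fls_of_poly p"
    using assms(1) by (rule LP_obtain_poly)
  moreover obtain l q where "g = upow l * fls_of_poly q"
    using assms(2) by (rule LP_obtain_poly)
  ultimately have "f * g = upow (k + l) * fls_of_poly (p * q)"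
    by (simp add: upow_add fls_of_poly_mult mult_ac)
  then show ?thesis
    by (simp add: LP_upow_mult_fls_of_poly)
qed

lemma lbar_nth:
  assumes "f \<in> LP"
  shows "fls_nth (lbar f) n = fls_nth f (- n)"
proof -
  obtain M where "\<And>n. fls_nth f n \<noteq> 0 \<Longrightarrow> \<bar>n\<bar> \<le> M"
    using LP_support_bounded[OF assms] by blast
  then have "\<forall>n < - M. fls_nth f (- n) = 0"
    by fastforce
  then show ?thesis
    unfolding lbar_def by (intro nth_Abs_fls_ex_lower_bound) blast
qed

lemma LP_lbar: "f \<in> LP \<Longrightarrow> lbar f \<in> LP"
  using finite_vimageI[of "{n. fls_nth f n \<noteq> 0}" uminus]
  by (simp add: LP_def lbar_nth vimage_def)

lemma lbar_add: "f \<in> LP \<Longrightarrow> g \<in> LP \<Longrightarrow> lbar (f + g) = lbar f + lbar g"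
  by (rule fls_eqI) (simp add: lbar_nth LP_add)

lemma lbar_fls_const [simp]: "lbar (fls_const c) = fls_const c"
  by (rule fls_eqI) (simp add: lbar_nth)

lemma lbar_fls_const_mult: "g \<in> LP \<Longrightarrow> lbar (fls_const c * g) = fls_const c * lbar g"
  by (rule fls_eqI) (simp add: lbar_nth LP_mult)

lemma lbar_upow_mult: "f \<in> LP \<Longrightarrow> lbar (upow k * f) = upow (- k) * lbar f"
  by (rule fls_eqI) (simp add: lbar_nth LP_mult upow_mult_nth)

lemma lbar_upow: "lbar (upow k) = upow (- k)"
  by (rule fls_eqI) (auto simp: lbar_nth upow_nth)

lemma lbar_0 [simp]: "lbar 0 = 0"
  by (rule fls_eqI) (simp add: lbar_nth)

lemma lbar_1 [simp]: "lbar 1 = 1"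
  using lbar_upow[of 0] by simp

lemma lbar_lbar: "f \<in> LP \<Longrightarrow> lbar (lbar f) = f"
  by (rule fls_eqI) (simp add: lbar_nth LP_lbar)

lemma lbar_fls_of_poly_mult:
  "g \<in> LP \<Longrightarrow> lbar (fls_of_poly p * g) = lbar (fls_of_poly p) * lbar g"
proof (induction p arbitrary: g rule: pCons_induct)
  case (pCons c p)
  have expand: "fls_of_poly (pCons c p) * h = fls_const c * h + upow 1 * (fls_of_poly p * h)" for h
    by (simp add: fls_of_poly_pCons algebra_simps)
  have "lbar (fls_of_poly (pCons c p) * g)
      = fls_const c * lbar g + upow (- 1) * (lbar (fls_of_poly p) * lbar g)"
    unfolding expand using pCons.prems
    by (simp add: lbar_add lbar_fls_const_mult lbar_upow_mult pCons.IH LP_mult)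
  also have "\<dots> = lbar (fls_of_poly (pCons c p)) * lbar g"
    using expand[of 1] by (simp add: lbar_add lbar_upow_mult LP_mult algebra_simps)
  finally show ?case .
qed simp

lemma lbar_mult:
  assumes "f \<in> LP" "g \<in> LP"
  shows "lbar (f * g) = lbar f * lbar g"
proof -
  obtain k p where f: "f = upow k * fls_of_poly p"
    using assms(1) by (rule LP_obtain_poly)
  have "lbar (f * g) = upow (- k) * lbar (fls_of_poly p * g)"
    using assms by (simp add: f mult.assoc lbar_upow_mult LP_mult)
  also have "\<dots> = lbar f * lbar g"
    using assms by (simp add: f lbar_fls_of_poly_mult lbar_upow_mult)
  finally show ?thesis .
qed

lemma lbar_lincomb:
  assumes "f \<in> LP" "g \<in> LP" "x \<in> LP" "y \<in> LP"
  shows "lbar (f * x + g * y) = lbar f * lbar x + lbar g * lbar y"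
  using assms by (simp add: lbar_add lbar_mult LP_mult)

lemma field_poly_bezout:
  fixes p r :: "'a::field poly"
  shows "\<exists>A B g. A * p + B * r = g \<and> g dvd p \<and> g dvd r"
proof (induction "if r = 0 then 0 else Suc (degree r)" arbitrary: p r rule: less_induct)
  case less
  show ?case
  proof (cases "r = 0")
    case True
    then show ?thesis by (intro exI[of _ 1] exI[of _ 0] exI[of _ p]) simp
  next
    case False
    then have "(if p mod r = 0 then 0 else Suc (degree (p mod r))) < (if r = 0 then 0 else Suc (degree r))"
      using degree_mod_less'[of r p] by auto
    then obtain A B g where g: "A * r + B * (p mod r) = g" "g dvd r" "g dvd p mod r"
      using less by blast
    have "g dvd p"
      using g(2,3) dvd_mod_iff by blast
    moreover have "B * p + (A - B * (p div r)) * r = g"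
      using g(1) by (simp add: algebra_simps flip: minus_div_mult_eq_mod)
    ultimately show ?thesis
      using g(2) by blast
  qed
qed

lemma minimal_imp_bezout:
  assumes "minimal xp xm"
  obtains \<alpha> \<beta> where "\<alpha> \<in> LP" "\<beta> \<in> LP" "\<alpha> * xp + \<beta> * xm = 1"
proof -
  have coprime: "\<And>d. d \<in> LP \<Longrightarrow> ldvd d xp \<Longrightarrow> ldvd d xm \<Longrightarrow> lunit d"
    using assms unfolding minimal_def by blast
  have "xp \<in> LP" "xm \<in> LP"
    using assms unfolding minimal_def by simp_all
  obtain k p where xp: "xp = upow k * fls_of_poly p"
    using \<open>xp \<in> LP\<close> by (rule LP_obtain_poly)
  obtain l r where xm: "xm = upow l * fls_of_poly r"
    using \<open>xm \<in> LP\<close> by (rule LP_obtain_poly)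
  obtain A B g where g: "A * p + B * r = g" "g dvd p" "g dvd r"
    using field_poly_bezout by blast
  obtain p' r' where "p = g * p'" "r = g * r'"
    using g(2,3) by (elim dvdE)
  then have "ldvd (fls_of_poly g) xp" "ldvd (fls_of_poly g) xm"
    unfolding ldvd_def xp xm
    by (auto simp: fls_of_poly_mult LP_upow_mult_fls_of_poly mult.left_commute)
  then obtain e where e: "e \<in> LP" "fls_of_poly g * e = 1"
    using coprime[OF LP_fls_of_poly] unfolding lunit_def by blast
  show ?thesis
  proof (rule that)
    show "fls_of_poly A * e * upow (- k) \<in> LP" "fls_of_poly B * e * upow (- l) \<in> LP"
      using e(1) by (simp_all add: LP_mult)
    have "upow (- k) * upow k = 1" "upow (- l) * upow l = 1"
      by simp_all
    then have "fls_of_poly A * e * upow (- k) * xp + fls_of_poly B * e * upow (- l) * xm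
        = e * (fls_of_poly A * fls_of_poly p + fls_of_poly B * fls_of_poly r)"
      unfolding xp xm by algebra
    also have "\<dots> = 1"
      using e(2) by (simp add: g(1)[symmetric] fls_of_poly_add fls_of_poly_mult mult.commute)
    finally show "fls_of_poly A * e * upow (- k) * xp + fls_of_poly B * e * upow (- l) * xm = 1" .
  qed
qed

lemma bezout_kernel:
  fixes x y p q :: "'a::comm_ring_1"
  assumes "\<alpha> * x + \<beta> * y = 1" "p * x = q * y"
  shows "p = (\<alpha> * q + \<beta> * p) * y" "q = (\<alpha> * q + \<beta> * p) * x"
proof -
  have "p = p * (\<alpha> * x + \<beta> * y)" "q = q * (\<alpha> * x + \<beta> * y)"
    using assms(1) by simp_all
  then show "p = (\<alpha> * q + \<beta> * p) * y" "q = (\<alpha> * q + \<beta> * p) * x"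
    using assms(2) by (simp_all add: algebra_simps)
qed

lemma glider_imp_wedge_dvd:
  assumes "minimal xp xm" and "csca a b c d"
    and eigen: "a * xp + b * xm = upow n * xp" "c * xp + d * xm = upow n * xm"
  shows "ldvd (wedge (xp, xm) (lbar xp, lbar xm)) (upow (- n) + upow n)"
proof -
  define w where "w = xp * lbar xm + lbar xp * xm"
  define s where "s = upow (- n) + upow n"
  have LP: "xp \<in> LP" "xm \<in> LP" "a \<in> LP" "b \<in> LP" "c \<in> LP" "d \<in> LP"
    using assms(1,2) unfolding minimal_def csca_def RP_def by simp_all
  have palindromic: "lbar a = a" "lbar b = b" "lbar c = c" "lbar d = d"
    using assms(2) unfolding csca_def RP_def by simp_all
  obtain \<alpha> \<beta> where bezout: "\<alpha> \<in> LP" "\<beta> \<in> LP" "\<alpha> * xp + \<beta> * xm = 1"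
    using assms(1) by (rule minimal_imp_bezout)
  define k where "k = \<alpha> * b + \<beta> * (a + upow n)"
  define m where "m = \<alpha> * (d + upow n) + \<beta> * c"
  have "(a + upow n) * xp = a * xp + (a * xp + b * xm)"
    using eigen(1) by (simp add: distrib_right)
  then have row1: "a + upow n = k * xm" "b = k * xp"
    using bezout_kernel[OF bezout(3), of "a + upow n" b] unfolding k_def by simp_all
  have "(d + upow n) * xm = d * xm + (c * xp + d * xm)"
    using eigen(2) by (simp add: distrib_right)
  then have row2: "c = m * xm" "d + upow n = m * xp"
    using bezout_kernel[OF bezout(3), of c "d + upow n"] unfolding m_def
    by (simp_all add: add.left_commute)
  have "a * lbar xp + b * lbar xm = upow (- n) * lbar xp"
    "c * lbar xp + d * lbar xm = upow (- n) * lbar xm"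
    using arg_cong[OF eigen(1), of lbar] arg_cong[OF eigen(2), of lbar] LP
    by (simp_all add: lbar_lincomb lbar_mult lbar_upow palindromic)
  then have "k * w = s * lbar xp" "m * w = s * lbar xm"
    unfolding w_def s_def using row1 row2 by algebra+
  moreover have "lbar \<alpha> * lbar xp + lbar \<beta> * lbar xm = 1"
    using lbar_lincomb[OF bezout(1,2) LP(1,2)] bezout(3) by simp
  ultimately have "s = w * (lbar \<alpha> * k + lbar \<beta> * m)"
    by algebra
  moreover have "lbar \<alpha> * k + lbar \<beta> * m \<in> LP"
    using LP bezout unfolding k_def m_def by (simp add: LP_add LP_mult LP_lbar)
  ultimately show ?thesis
    unfolding ldvd_def wedge_def w_def s_def by auto
qed

lemma wedge_dvd_imp_glider:
  assumes LP: "xp \<in> LP" "xm \<in> LP" and "n \<noteq> 0"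
    and "ldvd (wedge (xp, xm) (lbar xp, lbar xm)) (upow (- n) + upow n)"
  shows "\<exists>a b c d. csca a b c d \<and>
           a * xp + b * xm = upow n * xp \<and> c * xp + d * xm = upow n * xm"
proof -
  define w where "w = xp * lbar xm + lbar xp * xm"
  define s where "s = upow (- n) + upow n"
  obtain q where q: "q \<in> LP" "s = w * q"
    using assms(4) unfolding ldvd_def wedge_def w_def s_def by auto
  have LP': "lbar xp \<in> LP" "lbar xm \<in> LP" "w \<in> LP"
    using LP unfolding w_def by (simp_all add: LP_lbar LP_add LP_mult)
  have "lbar w = w"
    using LP LP' unfolding w_def by (simp add: lbar_lincomb lbar_lbar add.commute mult.commute)
  moreover have "lbar s = s"
    unfolding s_def by (simp add: lbar_add lbar_upow add.commute)
  moreover have "w \<noteq> 0"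
    using q(2) upow_neg_add_upow_nonzero[OF assms(3)] unfolding s_def by auto
  ultimately have "lbar q = q"
    using q LP' by (simp add: lbar_mult)
  define a where "a = upow n + q * lbar xp * xm"
  define b where "b = q * lbar xp * xp"
  define c where "c = q * lbar xm * xm"
  define d where "d = upow n + q * lbar xm * xp"
  have "lbar a = upow (- n) + q * xp * lbar xm" "lbar d = upow (- n) + q * xm * lbar xp"
    using LP LP' q \<open>lbar q = q\<close> unfolding a_def d_def
    by (simp_all add: lbar_add lbar_mult LP_mult lbar_upow lbar_lbar)
  then have "a + lbar a = s + w * q" "d + lbar d = s + w * q"
    unfolding a_def d_def s_def w_def by (simp_all add: algebra_simps)
  then have "lbar a = a" "lbar d = d"
    using q(2) by (simp_all add: bit_fls_add_eq_0_iff eq_commute[of "lbar _"])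
  moreover have "lbar b = b" "lbar c = c"
    using LP LP' q \<open>lbar q = q\<close> unfolding b_def c_def
    by (simp_all add: lbar_mult LP_mult lbar_lbar mult_ac)
  moreover have "a \<in> LP" "b \<in> LP" "c \<in> LP" "d \<in> LP"
    using LP LP' q unfolding a_def b_def c_def d_def by (simp_all add: LP_add LP_mult)
  moreover have "a * d - b * c = 1"
  proof -
    have "a * d - b * c = upow n * (upow n + w * q)"
      unfolding a_def b_def c_def d_def w_def by algebra
    also have "\<dots> = upow n * (upow n + (upow (- n) + upow n))"
      using q(2) unfolding s_def by simp
    also have "\<dots> = upow n * upow (- n)"
      by (simp only: add.commute[of "upow (- n)"] bit_fls_add_cancel_left)
    also have "\<dots> = 1"
      by (simp flip: upow_add)
    finally show ?thesis .
  qed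
  moreover have "a * xp + b * xm = upow n * xp + (q * lbar xp * xp * xm + q * lbar xp * xp * xm)"
    "c * xp + d * xm = upow n * xm + (q * lbar xm * xp * xm + q * lbar xm * xp * xm)"
    unfolding a_def b_def c_def d_def by (simp_all add: algebra_simps)
  ultimately show ?thesis
    unfolding csca_def RP_def by auto
qed

theorem mainTheorem2:
  fixes xp xm :: "bit fls" and n :: int
  assumes "minimal xp xm" and "n \<noteq> 0"
  shows "(\<exists>a b c d. csca a b c d \<and>
            a * xp + b * xm = upow n * xp \<and> c * xp + d * xm = upow n * xm)
         \<longleftrightarrow> ldvd (wedge (xp, xm) (lbar xp, lbar xm)) (upow (- n) + upow n)"
proof -
  have "xp \<in> LP" "xm \<in> LP"
    using assms(1) unfolding minimal_def by simp_all
  then show ?thesis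
    using glider_imp_wedge_dvd[OF assms(1)] wedge_dvd_imp_glider[of xp xm n] assms(2) by blast
qed

end
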